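(* Let $X$ be a pure simplicial complex, $k\ge0$, $L$ a $k$-dimensional $l$-assignment, and $(\pi_\sigma)_{\sigma\in X(k)}$ any family of permutations of $[l]$. Then $$\mathrm{dist}(L,\mathcal A_l)\le\frac1l\sum_{i=1}^l\mathrm{dist}\big((L^\sigma_{\pi_\sigma(i)})_{\sigma\in X(k)},\mathcal A\big),$$ where $\mathcal A_l$ is the set of agreeing $k$-dimensional $l$-assignments and $\mathcal A$ the set of agreeing $k$-dimensional assignments.
   Context: $X(k)$ = faces with $k+1$ elements; weights $w_X(\sigma)=|\{\tau\in X(d):\sigma\subseteq\tau\}|/(\binom{d+1}{|\sigma|}|X(d)|)$ for $d=\dim X$. A $k$-dimensional assignment is $F=(F^\sigma)_{\sigma\in X(k)}$, $F^\sigma:\sigma\to\{0,1\}$; agreeing if some $g:X(0)\to\{0,1\}$ has $g|_\sigma=F^\sigma$ for all $\sigma$; $\mathrm{dist}(F,F')=\sum_{\sigma:F^\sigma\ne F'^\sigma}w_X(\sigma)$. A $k$-dimensional $l$-assignment is $L=(L^\sigma_i)_{\sigma\in X(k),i\in[l]}$ with $L^\sigma_i:\sigma\to\{0,1\}$; $\mathrm{dist}(L,M)=\sum_\sigma w_X(\sigma)|\{i:L^\sigma_i\neq M^\sigma_i\}|/l$; $L$ is agreeing if there are $g_1,\dots,g_l:X(0)\to\{0,1\}$ and permutations $\rho_\sigma$ of $[l]$ with $L^\sigma_{\rho_\sigma(i)}=g_i|_\sigma$ for all $\sigma,i$. Distance to a set is the minimum. *)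

theory Defs
  imports Complex_Main "HOL-Combinatorics.Permutations"
begin

definition simplicial_complex :: "'v set set \<Rightarrow> bool" where
  "simplicial_complex X \<longleftrightarrow> finite X \<and> X \<noteq> {} \<and> (\<forall>\<sigma>\<in>X. finite \<sigma>)
     \<and> (\<forall>\<sigma>\<in>X. \<forall>\<tau>. \<tau> \<subseteq> \<sigma> \<longrightarrow> \<tau> \<in> X)"

definition faces :: "'v set set \<Rightarrow> nat \<Rightarrow> 'v set set" where
  "faces X k = {\<sigma>\<in>X. card \<sigma> = k + 1}"

definition cdim :: "'v set set \<Rightarrow> nat" where
  "cdim X = Max (card ` X) - 1"

definition pure :: "'v set set \<Rightarrow> bool" where
  "pure X \<longleftrightarrow> (\<forall>\<sigma>\<in>X. \<exists>\<tau>\<in>faces X (cdim X). \<sigma> \<subseteq> \<tau>)"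

definition weight :: "'v set set \<Rightarrow> 'v set \<Rightarrow> real" where
  "weight X \<sigma> = real (card {\<tau>\<in>faces X (cdim X). \<sigma> \<subseteq> \<tau>})
      / (real ((cdim X + 1) choose card \<sigma>) * real (card (faces X (cdim X))))"

text \<open>A k-dimensional assignment: F \<sigma> is a map \<sigma> \<rightarrow> {0,1}; only values on \<sigma> matter.\<close>
definition local_differ :: "'v set \<Rightarrow> ('v \<Rightarrow> bool) \<Rightarrow> ('v \<Rightarrow> bool) \<Rightarrow> bool" where
  "local_differ \<sigma> f g \<longleftrightarrow> (\<exists>v\<in>\<sigma>. f v \<noteq> g v)"

definition agreeing :: "'v set set \<Rightarrow> nat \<Rightarrow> ('v set \<Rightarrow> 'v \<Rightarrow> bool) \<Rightarrow> bool" where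
  "agreeing X k F \<longleftrightarrow> (\<exists>g :: 'v \<Rightarrow> bool. \<forall>\<sigma>\<in>faces X k. \<forall>v\<in>\<sigma>. g v = F \<sigma> v)"

definition adist :: "'v set set \<Rightarrow> nat \<Rightarrow> ('v set \<Rightarrow> 'v \<Rightarrow> bool) \<Rightarrow> ('v set \<Rightarrow> 'v \<Rightarrow> bool) \<Rightarrow> real" where
  "adist X k F F' = (\<Sum>\<sigma>\<in>{\<sigma>\<in>faces X k. local_differ \<sigma> (F \<sigma>) (F' \<sigma>)}. weight X \<sigma>)"

definition adist_agreeing :: "'v set set \<Rightarrow> nat \<Rightarrow> ('v set \<Rightarrow> 'v \<Rightarrow> bool) \<Rightarrow> real" where
  "adist_agreeing X k F = Inf {adist X k F F' | F'. agreeing X k F'}"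

text \<open>A k-dimensional l-assignment: L \<sigma> i for i \<in> [l] = {0..<l}.\<close>
definition agreeing_l :: "'v set set \<Rightarrow> nat \<Rightarrow> nat \<Rightarrow> ('v set \<Rightarrow> nat \<Rightarrow> 'v \<Rightarrow> bool) \<Rightarrow> bool" where
  "agreeing_l X k l L \<longleftrightarrow> (\<exists>(g :: nat \<Rightarrow> 'v \<Rightarrow> bool) (\<rho> :: 'v set \<Rightarrow> nat \<Rightarrow> nat).
      (\<forall>\<sigma>\<in>faces X k. \<rho> \<sigma> permutes {..<l}) \<and>
      (\<forall>\<sigma>\<in>faces X k. \<forall>i<l. \<forall>v\<in>\<sigma>. L \<sigma> (\<rho> \<sigma> i) v = g i v))"

definition ldist :: "'v set set \<Rightarrow> nat \<Rightarrow> nat \<Rightarrow> ('v set \<Rightarrow> nat \<Rightarrow> 'v \<Rightarrow> bool)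
     \<Rightarrow> ('v set \<Rightarrow> nat \<Rightarrow> 'v \<Rightarrow> bool) \<Rightarrow> real" where
  "ldist X k l L M = (\<Sum>\<sigma>\<in>faces X k. weight X \<sigma> *
       real (card {i\<in>{..<l}. local_differ \<sigma> (L \<sigma> i) (M \<sigma> i)}) / real l)"

definition ldist_agreeing :: "'v set set \<Rightarrow> nat \<Rightarrow> nat \<Rightarrow> ('v set \<Rightarrow> nat \<Rightarrow> 'v \<Rightarrow> bool) \<Rightarrow> real" where
  "ldist_agreeing X k l L = Inf {ldist X k l L M | M. agreeing_l X k l M}"

end

theory Submission
  imports Defs
begin

text \<open>For each row \<open>i\<close> pick a global function \<open>g\<^sub>i\<close> realising the distance of the
  \<open>i\<close>-th permuted row to the agreeing assignments (the infimum is a minimum, since there are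
  only finitely many values). Undoing the permutations \<open>\<pi>\<^sub>\<sigma>\<close>, the functions \<open>g\<^sub>1, \<dots>, g\<^sub>l\<close>
  form an agreeing \<open>l\<close>-assignment, and its distance to \<open>L\<close> is exactly the average of the
  \<open>l\<close> row distances, because \<open>ldist\<close> counts disagreeing rows face by face and this count
  does not depend on the order of the rows.\<close>

lemma finite_faces: "simplicial_complex X \<Longrightarrow> finite (faces X k)"
  unfolding simplicial_complex_def faces_def by auto

lemma weight_nonneg: "weight X \<sigma> \<ge> 0"
  unfolding weight_def by simp

lemma adist_cong:
  assumes "\<forall>\<sigma>\<in>faces X k. \<forall>v\<in>\<sigma>. F' \<sigma> v = F'' \<sigma> v"
  shows "adist X k F F' = adist X k F F''"
  unfolding adist_def local_differ_def using assms by (intro sum.cong Collect_cong) auto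

lemma adist_eq_sum_of_bool:
  assumes "finite (faces X k)"
  shows "adist X k F F' = (\<Sum>\<sigma>\<in>faces X k. weight X \<sigma> * of_bool (local_differ \<sigma> (F \<sigma>) (F' \<sigma>)))"
  unfolding adist_def using assms by (simp add: Int_def conj_commute)

lemma adist_agreeing_attained:
  assumes "finite (faces X k)"
  obtains g where "adist X k F (\<lambda>\<sigma>. g) = adist_agreeing X k F"
proof -
  let ?S = "{adist X k F F' | F'. agreeing X k F'}"
  have "?S \<subseteq> sum (weight X) ` Pow (faces X k)"
    unfolding adist_def by auto
  then have fin: "finite ?S"
    by (rule finite_subset) (use assms in simp)
  have ne: "?S \<noteq> {}"
    unfolding agreeing_def by (auto intro!: exI[of _ "\<lambda>\<sigma> v. False"])
  have "Inf ?S \<in> ?S"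
    unfolding cInf_eq_Min[OF fin ne] using fin ne by (rule Min_in)
  then obtain F' where "agreeing X k F'" and F': "adist X k F F' = adist_agreeing X k F"
    unfolding adist_agreeing_def by auto
  then obtain g where "\<forall>\<sigma>\<in>faces X k. \<forall>v\<in>\<sigma>. g v = F' \<sigma> v"
    unfolding agreeing_def by auto
  then have "adist X k F (\<lambda>\<sigma>. g) = adist X k F F'"
    by (intro adist_cong) auto
  with F' show thesis
    using that by simp
qed

lemma ldist_nonneg: "ldist X k l L M \<ge> 0"
  unfolding ldist_def by (intro sum_nonneg divide_nonneg_nonneg mult_nonneg_nonneg weight_nonneg) auto

lemma ldist_agreeing_le_ldist:
  "agreeing_l X k l M \<Longrightarrow> ldist_agreeing X k l L \<le> ldist X k l L M"
  unfolding ldist_agreeing_def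
  by (rule cInf_lower) (auto intro: bdd_belowI[of _ 0] ldist_nonneg)

lemma agreeing_l_unpermute:
  assumes "\<forall>\<sigma>\<in>faces X k. \<pi> \<sigma> permutes {..<l}"
  shows "agreeing_l X k l (\<lambda>\<sigma> j. g (inv (\<pi> \<sigma>) j))"
  unfolding agreeing_l_def
  using assms by (intro exI[of _ g] exI[of _ \<pi>]) (auto simp: permutes_inverses(2))

lemma card_filter_permute:
  fixes l :: nat
  assumes "p permutes {..<l}"
  shows "real (card {j\<in>{..<l}. P j}) = (\<Sum>i<l. of_bool (P (p i)))"
proof -
  have "real (card {j\<in>{..<l}. P j}) = (\<Sum>j<l. of_bool (P j))"
    using sum.inter_filter[of "{..<l}" "\<lambda>_. 1 :: real" P] by (simp add: of_bool_def)
  also have "\<dots> = (\<Sum>i<l. of_bool (P (p i)))"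
    using sum.permute[OF assms, of "\<lambda>j. of_bool (P j) :: real"] unfolding comp_def .
  finally show ?thesis .
qed

lemma ldist_eq_mean_adist:
  assumes "finite (faces X k)" and "\<forall>\<sigma>\<in>faces X k. \<pi> \<sigma> permutes {..<l}"
  shows "ldist X k l L M
    = (1 / real l) * (\<Sum>i<l. adist X k (\<lambda>\<sigma>. L \<sigma> (\<pi> \<sigma> i)) (\<lambda>\<sigma>. M \<sigma> (\<pi> \<sigma> i)))"
proof -
  let ?d = "\<lambda>\<sigma> i. weight X \<sigma> * of_bool (local_differ \<sigma> (L \<sigma> (\<pi> \<sigma> i)) (M \<sigma> (\<pi> \<sigma> i)))"
  have rows: "real (card {j\<in>{..<l}. local_differ \<sigma> (L \<sigma> j) (M \<sigma> j)})
      = (\<Sum>i<l. of_bool (local_differ \<sigma> (L \<sigma> (\<pi> \<sigma> i)) (M \<sigma> (\<pi> \<sigma> i))))"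
    if "\<sigma> \<in> faces X k" for \<sigma>
    using card_filter_permute[of "\<pi> \<sigma>" l "\<lambda>j. local_differ \<sigma> (L \<sigma> j) (M \<sigma> j)"] assms(2) that
    by simp
  have "ldist X k l L M = (\<Sum>\<sigma>\<in>faces X k. (1 / real l) * (\<Sum>i<l. ?d \<sigma> i))"
    unfolding ldist_def
    by (intro sum.cong refl) (simp only: rows, simp add: sum_distrib_left)
  also have "\<dots> = (1 / real l) * (\<Sum>i<l. \<Sum>\<sigma>\<in>faces X k. ?d \<sigma> i)"
    unfolding sum_distrib_left by (rule sum.swap)
  also have "\<dots> = (1 / real l) * (\<Sum>i<l. adist X k (\<lambda>\<sigma>. L \<sigma> (\<pi> \<sigma> i)) (\<lambda>\<sigma>. M \<sigma> (\<pi> \<sigma> i)))"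
    by (simp only: adist_eq_sum_of_bool[OF assms(1)])
  finally show ?thesis .
qed

theorem mainTheorem6:
  fixes X :: "'v set set" and k l :: nat
    and L :: "'v set \<Rightarrow> nat \<Rightarrow> 'v \<Rightarrow> bool"
    and \<pi> :: "'v set \<Rightarrow> nat \<Rightarrow> nat"
  assumes "simplicial_complex X" and "pure X"
    and "\<forall>\<sigma>\<in>faces X k. \<pi> \<sigma> permutes {..<l}"
  shows "ldist_agreeing X k l L
     \<le> (1 / real l) * (\<Sum>i<l. adist_agreeing X k (\<lambda>\<sigma>. L \<sigma> (\<pi> \<sigma> i)))"
proof -
  have fin: "finite (faces X k)"
    using assms(1) by (rule finite_faces)
  have "\<forall>i. \<exists>g. adist X k (\<lambda>\<sigma>. L \<sigma> (\<pi> \<sigma> i)) (\<lambda>\<sigma>. g)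
                  = adist_agreeing X k (\<lambda>\<sigma>. L \<sigma> (\<pi> \<sigma> i))"
    using adist_agreeing_attained[OF fin] by blast
  then obtain G where G: "\<And>i. adist X k (\<lambda>\<sigma>. L \<sigma> (\<pi> \<sigma> i)) (\<lambda>\<sigma>. G i)
                                = adist_agreeing X k (\<lambda>\<sigma>. L \<sigma> (\<pi> \<sigma> i))"
    by metis
  define M where "M = (\<lambda>\<sigma> j. G (inv (\<pi> \<sigma>) j))"
  have M_rows: "adist X k (\<lambda>\<sigma>. L \<sigma> (\<pi> \<sigma> i)) (\<lambda>\<sigma>. M \<sigma> (\<pi> \<sigma> i))
                 = adist X k (\<lambda>\<sigma>. L \<sigma> (\<pi> \<sigma> i)) (\<lambda>\<sigma>. G i)" for i
    unfolding M_def using assms(3) by (intro adist_cong) (auto simp: permutes_inverses(2))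
  have "ldist_agreeing X k l L \<le> ldist X k l L M"
    unfolding M_def using assms(3) by (intro ldist_agreeing_le_ldist agreeing_l_unpermute)
  also have "\<dots> = (1 / real l) * (\<Sum>i<l. adist X k (\<lambda>\<sigma>. L \<sigma> (\<pi> \<sigma> i)) (\<lambda>\<sigma>. M \<sigma> (\<pi> \<sigma> i)))"
    using fin assms(3) by (rule ldist_eq_mean_adist)
  also have "\<dots> = (1 / real l) * (\<Sum>i<l. adist_agreeing X k (\<lambda>\<sigma>. L \<sigma> (\<pi> \<sigma> i)))"
    by (simp only: M_rows G)
  finally show ?thesis .
qed

end
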